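(* The principle $\Diamond(\mathbb{N}^{\mathbb{N}}, =^\infty)$ implies $\mathfrak{a}_p = \aleph_1$.
   Context: For $f,g\in\mathbb{N}^{\mathbb{N}}$, $f =^\infty g$ means $\{n : f(n)=g(n)\}$ is infinite. A function $F : {}^{<\omega_1}2 \to \mathbb{N}^{\mathbb{N}}$ is Borel if for every $\delta<\omega_1$ its restriction to ${}^\delta 2$ is a Borel function. $\Diamond(\mathbb{N}^{\mathbb{N}},=^\infty)$ is the statement: for every Borel $F : {}^{<\omega_1}2\to\mathbb{N}^{\mathbb{N}}$ there is $G:\omega_1\to\mathbb{N}^{\mathbb{N}}$ such that for every $f:\omega_1\to 2$ the set $\{\delta<\omega_1 : F(f\upharpoonright\delta) =^\infty G(\delta)\}$ is stationary. A family $\mathcal{A}$ of permutations of $\mathbb{N}$ is almost disjoint if any two distinct members agree on only finitely many inputs; it is a maximal almost disjoint family of permutations if it is almost disjoint and not properly contained in another almost disjoint family of permutations. $\mathfrak{a}_p$ is the least cardinality of a maximal almost disjoint family of permutations. *)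

theory Defs
  imports "HOL-Analysis.Analysis"
begin

text \<open>omega_1 is represented by the canonical well-order cardSuc natLeq (the successor
cardinal of aleph_0, i.e. aleph_1), on the set Omega1 of its field.
(a, b) in omega1 means a \<le> b.\<close>

definition omega1 :: "nat set rel" where
  "omega1 = cardSuc natLeq"

definition Omega1 :: "nat set set" where
  "Omega1 = Field omega1"

definition olt :: "nat set \<Rightarrow> nat set \<Rightarrow> bool" where
  "olt a b \<longleftrightarrow> (a, b) \<in> omega1 \<and> a \<noteq> b"

definition club :: "nat set set \<Rightarrow> bool" where
  "club C \<longleftrightarrow> C \<subseteq> Omega1
     \<and> (\<forall>\<alpha>\<in>Omega1. \<exists>\<beta>\<in>C. olt \<alpha> \<beta>)
     \<and> (\<forall>\<delta>\<in>Omega1. (\<exists>\<alpha>. olt \<alpha> \<delta>) \<and> (\<forall>\<alpha>. olt \<alpha> \<delta> \<longrightarrow> (\<exists>\<beta>\<in>C. olt \<alpha> \<beta> \<and> olt \<beta> \<delta>))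
              \<longrightarrow> \<delta> \<in> C)"

definition stationary :: "nat set set \<Rightarrow> bool" where
  "stationary S \<longleftrightarrow> S \<subseteq> Omega1 \<and> (\<forall>C. club C \<longrightarrow> S \<inter> C \<noteq> {})"

text \<open>With the product topology (nat discrete) the subspace
seqs2 delta is the Cantor space 2^delta.\<close>

definition seqs2 :: "nat set \<Rightarrow> (nat set \<Rightarrow> nat) set" where
  "seqs2 \<delta> = (underS omega1 \<delta>) \<rightarrow>\<^sub>E {0::nat, 1}"

text \<open>A function F on the disjoint union of all 2^delta, delta < omega_1, is given in
curried form F delta s (s in 2^delta); it is Borel iff each restriction to 2^delta is
Borel measurable into Baire space nat \<Rightarrow> nat (product topology).\<close>

definition Borel_on_tree :: "(nat set \<Rightarrow> (nat set \<Rightarrow> nat) \<Rightarrow> (nat \<Rightarrow> nat)) \<Rightarrow> bool" where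
  "Borel_on_tree F \<longleftrightarrow>
     (\<forall>\<delta>\<in>Omega1. F \<delta> \<in> borel_measurable (restrict_space borel (seqs2 \<delta>)))"

definition eq_inf :: "(nat \<Rightarrow> nat) \<Rightarrow> (nat \<Rightarrow> nat) \<Rightarrow> bool" where
  "eq_inf f g \<longleftrightarrow> infinite {n. f n = g n}"

definition Diamond_Baire_eqinf :: bool where
  "Diamond_Baire_eqinf \<longleftrightarrow>
     (\<forall>F. Borel_on_tree F \<longrightarrow>
        (\<exists>G :: nat set \<Rightarrow> (nat \<Rightarrow> nat).
           \<forall>f \<in> Omega1 \<rightarrow> {0::nat, 1}.
             stationary {\<delta> \<in> Omega1. eq_inf (F \<delta> (restrict f (underS omega1 \<delta>))) (G \<delta>)}))"

definition ad_perms :: "(nat \<Rightarrow> nat) set \<Rightarrow> bool" where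
  "ad_perms A \<longleftrightarrow> (\<forall>p\<in>A. bij p) \<and> (\<forall>p\<in>A. \<forall>q\<in>A. p \<noteq> q \<longrightarrow> finite {n. p n = q n})"

definition mad_perms :: "(nat \<Rightarrow> nat) set \<Rightarrow> bool" where
  "mad_perms A \<longleftrightarrow> ad_perms A \<and> (\<forall>p. bij p \<and> p \<notin> A \<longrightarrow> \<not> ad_perms (insert p A))"

definition ap_eq_aleph1 :: bool where
  "ap_eq_aleph1 \<longleftrightarrow>
     (\<exists>A. mad_perms A \<and> (card_of A, cardSuc natLeq) \<in> ordIso)
     \<and> (\<forall>A. mad_perms A \<longrightarrow> (cardSuc natLeq, card_of A) \<in> ordLeq)"

end

theory Submission
  imports Defs "HOL-Library.Nat_Bijection"
begin

unbundle cardinal_syntax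

text \<open>
  The lower bound a_p \<ge> aleph_1 holds outright.  Given countably many permutations
  e 0, e 1, ..., the permutation diag e g is the union of finite partial injections: stage n
  puts n into domain and range (back and forth) using only pairs that avoid e 0, ..., e (n-1),
  so diag e g is almost disjoint from every e j.  Stage n may also realise one pair (x, q x)
  from a guess g n coding an initial segment of a permutation q; if infinitely many guesses
  are good (predicts), then diag e g agrees with q infinitely often.

  For the upper bound, fam G \<delta> is defined by recursion along omega_1 as the diagonal
  permutation of an enumeration of the earlier fam G \<alpha>, \<alpha> < \<delta>, with the guess G \<delta>; the
  guesses G are supplied by the diamond principle applied to
  the Borel function guess_fun.  A permutation q almost disjoint from every fam G \<alpha> is coded,
  together with thresholds a \<alpha> beyond which q and fam G \<alpha> disagree, into a branch
  f : omega_1 \<rightarrow> 2.  At each point \<delta> of the club of closure points of this coding,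
  guess_fun reads good guesses off f restricted to \<delta>; diamond provides such a \<delta> where G \<delta>
  agrees with them infinitely often, so fam G \<delta> meets q infinitely often, which is absurd.
  Hence the fam G \<delta> form a maximal almost disjoint family of size aleph_1.
\<close>

section \<open>Finite approximations of a diagonal permutation\<close>

definition partial_inj :: "(nat \<times> nat) set \<Rightarrow> bool" where
  "partial_inj R \<longleftrightarrow> (\<forall>a b c d. (a, b) \<in> R \<longrightarrow> (c, d) \<in> R \<longrightarrow> (a = c \<longleftrightarrow> b = d))"

definition adds_fresh_pair :: "(nat \<Rightarrow> nat \<Rightarrow> bool) \<Rightarrow> (nat \<times> nat) set \<Rightarrow> (nat \<times> nat) set \<Rightarrow> bool" where
  "adds_fresh_pair P R R' \<longleftrightarrow>
     R' = R \<or> (\<exists>a b. a \<notin> Domain R \<and> b \<notin> Range R \<and> P a b \<and> R' = insert (a, b) R)"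

lemma adds_fresh_pair_props:
  assumes step: "adds_fresh_pair P R R'" and R: "finite R" "partial_inj R"
  shows "finite R'" "partial_inj R'" "R \<subseteq> R'" "card R' \<le> card R + 1"
    and "\<And>x y. (x, y) \<in> R' \<Longrightarrow> (x, y) \<notin> R \<Longrightarrow> P x y"
  using step R unfolding adds_fresh_pair_def partial_inj_def
  by (auto simp: card_insert_if)

definition avoids :: "(nat \<Rightarrow> nat \<Rightarrow> nat) \<Rightarrow> nat \<Rightarrow> nat \<Rightarrow> nat \<Rightarrow> bool" where
  "avoids e n x y \<longleftrightarrow> (\<forall>j<n. e j x \<noteq> y)"

text \<open>The three substeps of stage n: realise one pair of the guessed list L (a finite
  initial segment of the target permutation), then put n into the domain, then into the range.\<close>

definition guess_candidates :: "(nat \<Rightarrow> nat \<Rightarrow> nat) \<Rightarrow> nat list \<Rightarrow> nat \<Rightarrow> (nat \<times> nat) set \<Rightarrow> nat set" where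
  "guess_candidates e L n R =
     {x. x < length L \<and> x \<notin> Domain R \<and> L ! x \<notin> Range R \<and> avoids e n x (L ! x)}"

definition guess_step :: "(nat \<Rightarrow> nat \<Rightarrow> nat) \<Rightarrow> nat list \<Rightarrow> nat \<Rightarrow> (nat \<times> nat) set \<Rightarrow> (nat \<times> nat) set" where
  "guess_step e L n R =
     (let C = guess_candidates e L n R in if C = {} then R else insert (Min C, L ! Min C) R)"

definition forth_step :: "(nat \<Rightarrow> nat \<Rightarrow> nat) \<Rightarrow> nat \<Rightarrow> (nat \<times> nat) set \<Rightarrow> (nat \<times> nat) set" where
  "forth_step e n R =
     (if n \<in> Domain R then R else insert (n, LEAST y. y \<notin> Range R \<and> avoids e n n y) R)"

definition back_step :: "(nat \<Rightarrow> nat \<Rightarrow> nat) \<Rightarrow> nat \<Rightarrow> (nat \<times> nat) set \<Rightarrow> (nat \<times> nat) set" where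
  "back_step e n R =
     (if n \<in> Range R then R else insert (LEAST x. x \<notin> Domain R \<and> avoids e n x n, n) R)"

text \<open>Each substep adds at most one fresh pair avoiding e 0, ..., e (n-1); fresh values exist
  because the relation is finite and the e j are injective.\<close>

lemma guess_step_adds: "adds_fresh_pair (avoids e n) R (guess_step e L n R)"
proof (cases "guess_candidates e L n R = {}")
  case False
  let ?m = "Min (guess_candidates e L n R)"
  have "?m \<in> guess_candidates e L n R"
    using False by (intro Min_in) (auto simp: guess_candidates_def)
  then show ?thesis
    unfolding adds_fresh_pair_def guess_step_def Let_def using False
    by (intro disjI2 exI[of _ ?m] exI[of _ "L ! ?m"]) (auto simp: guess_candidates_def)
qed (simp add: adds_fresh_pair_def guess_step_def)

lemma forth_step_adds:
  assumes "finite R" shows "adds_fresh_pair (avoids e n) R (forth_step e n R)"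
proof -
  have "finite (Range R \<union> (\<lambda>j. e j n) ` {..<n})" using assms by (simp add: finite_Range)
  then obtain y0 where "y0 \<notin> Range R \<union> (\<lambda>j. e j n) ` {..<n}"
    using ex_new_if_finite[OF infinite_UNIV_nat] by blast
  then have "\<exists>y. y \<notin> Range R \<and> avoids e n n y" by (auto simp: avoids_def)
  from LeastI_ex[OF this] show ?thesis
    unfolding adds_fresh_pair_def forth_step_def by auto
qed

lemma back_step_adds:
  assumes "finite R" "\<forall>j. inj (e j)" shows "adds_fresh_pair (avoids e n) R (back_step e n R)"
proof -
  have "finite (e j -` {n})" for j using assms(2) by (simp add: finite_vimageI)
  then have "finite (Domain R \<union> (\<Union>j<n. e j -` {n}))" using assms(1) by (simp add: finite_Domain)
  then obtain x0 where "x0 \<notin> Domain R \<union> (\<Union>j<n. e j -` {n})"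
    using ex_new_if_finite[OF infinite_UNIV_nat] by blast
  then have "\<exists>x. x \<notin> Domain R \<and> avoids e n x n" by (auto simp: avoids_def)
  from LeastI_ex[OF this] show ?thesis
    unfolding adds_fresh_pair_def back_step_def by auto
qed

definition stage :: "(nat \<Rightarrow> nat \<Rightarrow> nat) \<Rightarrow> (nat \<Rightarrow> nat) \<Rightarrow> nat \<Rightarrow> (nat \<times> nat) set \<Rightarrow> (nat \<times> nat) set" where
  "stage e g n R = back_step e n (forth_step e n (guess_step e (list_decode (g n)) n R))"

lemma stage_props:
  assumes R: "finite R" "partial_inj R" and inj: "\<forall>j. inj (e j)"
  shows "finite (stage e g n R)" "partial_inj (stage e g n R)"
    "card (stage e g n R) \<le> card R + 3" "R \<subseteq> stage e g n R"
    "guess_step e (list_decode (g n)) n R \<subseteq> stage e g n R"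
    "n \<in> Domain (stage e g n R)" "n \<in> Range (stage e g n R)"
    "\<And>x y. (x, y) \<in> stage e g n R \<Longrightarrow> (x, y) \<notin> R \<Longrightarrow> avoids e n x y"
proof -
  let ?R1 = "guess_step e (list_decode (g n)) n R"
  let ?R2 = "forth_step e n ?R1"
  note S1 = adds_fresh_pair_props[OF guess_step_adds[where e=e and n=n and L="list_decode (g n)"] R]
  note S2 = adds_fresh_pair_props[OF forth_step_adds[OF S1(1), where e=e and n=n] S1(1,2)]
  note S3 = adds_fresh_pair_props[OF back_step_adds[OF S2(1) inj, where n=n] S2(1,2)]
  show "finite (stage e g n R)" "partial_inj (stage e g n R)"
    "card (stage e g n R) \<le> card R + 3" "R \<subseteq> stage e g n R" "?R1 \<subseteq> stage e g n R"
    using S1 S2 S3 unfolding stage_def by auto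
  have "n \<in> Domain ?R2" unfolding forth_step_def by auto
  then show "n \<in> Domain (stage e g n R)" using S3(3) unfolding stage_def by blast
  show "n \<in> Range (stage e g n R)" unfolding stage_def back_step_def by auto
  show "\<And>x y. (x, y) \<in> stage e g n R \<Longrightarrow> (x, y) \<notin> R \<Longrightarrow> avoids e n x y"
    using S1(3,5) S2(3,5) S3(5) unfolding stage_def by blast
qed

primrec approx :: "(nat \<Rightarrow> nat \<Rightarrow> nat) \<Rightarrow> (nat \<Rightarrow> nat) \<Rightarrow> nat \<Rightarrow> (nat \<times> nat) set" where
  "approx e g 0 = {}"
| "approx e g (Suc n) = stage e g n (approx e g n)"

lemma approx_props:
  assumes "\<forall>j. inj (e j)"
  shows "finite (approx e g n) \<and> partial_inj (approx e g n) \<and> card (approx e g n) \<le> 3 * n"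
proof (induction n)
  case 0 then show ?case by (simp add: partial_inj_def)
next
  case (Suc n) then show ?case using stage_props[OF _ _ assms, where R="approx e g n" and g=g and n=n] by auto
qed

lemma approx_mono:
  assumes "\<forall>j. inj (e j)" "n \<le> m" shows "approx e g n \<subseteq> approx e g m"
proof (rule lift_Suc_mono_le[OF _ assms(2)])
  fix k show "approx e g k \<subseteq> approx e g (Suc k)"
    using approx_props[OF assms(1)] stage_props(4)[OF _ _ assms(1)] by simp
qed

lemma approx_total:
  assumes "\<forall>j. inj (e j)"
  shows "n \<in> Domain (approx e g (Suc n))" "n \<in> Range (approx e g (Suc n))"
  using approx_props[OF assms] stage_props(6,7)[OF _ _ assms] by auto

lemma approx_entry:
  assumes "\<forall>j. inj (e j)" "(x, y) \<in> approx e g m"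
  shows "\<exists>n<m. (x, y) \<in> approx e g (Suc n) \<and> avoids e n x y"
  using assms(2)
proof (induction m)
  case (Suc m)
  show ?case
  proof (cases "(x, y) \<in> approx e g m")
    case True then show ?thesis using Suc.IH less_SucI by blast
  next
    case False then show ?thesis
      using Suc.prems approx_props[OF assms(1), of g m]
        stage_props(8)[OF _ _ assms(1), where R="approx e g m" and g=g and n=m] by auto
  qed
qed simp

lemma partial_inj_total_bij:
  assumes "partial_inj R" "Domain R = UNIV" "Range R = UNIV"
  defines "f \<equiv> \<lambda>x. THE y. (x, y) \<in> R"
  shows "bij f" "(x, y) \<in> R \<longleftrightarrow> f x = y"
proof -
  have graph: "(x, y) \<in> R \<longleftrightarrow> f x = y" for x y
  proof -
    obtain y' where y': "(x, y') \<in> R" using assms(2) by blast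
    have uniq: "(x, z) \<in> R \<Longrightarrow> z = y'" for z
      using y' assms(1) unfolding partial_inj_def by blast
    have "f x = y'" unfolding f_def using y' uniq by (rule the_equality)
    then show ?thesis using y' uniq by blast
  qed
  then show "(x, y) \<in> R \<longleftrightarrow> f x = y" .
  show "bij f"
  proof (rule bijI)
    show "inj f"
    proof (rule injI)
      fix a b assume "f a = f b"
      then have "(a, f a) \<in> R" "(b, f a) \<in> R" using graph by auto
      then show "a = b" using assms(1) unfolding partial_inj_def by blast
    qed
    show "surj f"
    proof (rule surjI)
      fix y
      obtain x where "(x, y) \<in> R" using assms(3) by blast
      then show "f (SOME x. (x, y) \<in> R) = y" using graph by (metis someI)
    qed
  qed
qed

section \<open>The diagonal permutation\<close>

definition diag_graph :: "(nat \<Rightarrow> nat \<Rightarrow> nat) \<Rightarrow> (nat \<Rightarrow> nat) \<Rightarrow> (nat \<times> nat) set" where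
  "diag_graph e g = (\<Union>n. approx e g n)"

definition diag0 :: "(nat \<Rightarrow> nat \<Rightarrow> nat) \<Rightarrow> (nat \<Rightarrow> nat) \<Rightarrow> nat \<Rightarrow> nat" where
  "diag0 e g x = (THE y. (x, y) \<in> diag_graph e g)"

lemma diag_graph_bij:
  assumes "\<forall>j. inj (e j)"
  shows "bij (diag0 e g)" "(x, y) \<in> diag_graph e g \<longleftrightarrow> diag0 e g x = y"
proof -
  have inj: "partial_inj (diag_graph e g)"
    unfolding partial_inj_def diag_graph_def
  proof clarify
    fix a b c d n m assume "(a, b) \<in> approx e g n" "(c, d) \<in> approx e g m"
    then have "(a, b) \<in> approx e g (max n m)" "(c, d) \<in> approx e g (max n m)"
      using approx_mono[OF assms] by (meson max.cobounded1 max.cobounded2 subsetD)+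
    then show "(a = c) = (b = d)" using approx_props[OF assms] unfolding partial_inj_def by blast
  qed
  have "z \<in> Domain (diag_graph e g)" "z \<in> Range (diag_graph e g)" for z
    using approx_total[OF assms, of z g] unfolding diag_graph_def by blast+
  then have total: "Domain (diag_graph e g) = UNIV" "Range (diag_graph e g) = UNIV" by blast+
  have eq: "diag0 e g = (\<lambda>x. THE y. (x, y) \<in> diag_graph e g)"
    by (simp add: diag0_def fun_eq_iff)
  note graph = partial_inj_total_bij[OF inj total]
  show "bij (diag0 e g)" unfolding eq by (rule graph(1))
  show "(x, y) \<in> diag_graph e g \<longleftrightarrow> diag0 e g x = y" unfolding eq by (rule graph(2))
qed

text \<open>A point where diag agrees with e j enters the graph at a stage \<le> j, hence lies in the
  finite domain of approx (Suc j).\<close>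

lemma diag0_almost_disjoint:
  assumes "\<forall>j. inj (e j)" shows "finite {x. diag0 e g x = e j x}"
proof (rule finite_subset)
  show "finite (Domain (approx e g (Suc j)))"
    using approx_props[OF assms] finite_Domain by blast
  show "{x. diag0 e g x = e j x} \<subseteq> Domain (approx e g (Suc j))"
  proof
    fix x assume "x \<in> {x. diag0 e g x = e j x}"
    then have "(x, e j x) \<in> diag_graph e g" using diag_graph_bij(2)[OF assms] by simp
    then obtain m where "(x, e j x) \<in> approx e g m" unfolding diag_graph_def by blast
    then obtain n where n: "(x, e j x) \<in> approx e g (Suc n)" "avoids e n x (e j x)"
      using approx_entry[OF assms] by blast
    have "\<not> j < n" using n(2) unfolding avoids_def by blast
    then have "Suc n \<le> Suc j" by simp
    then have "approx e g (Suc n) \<subseteq> approx e g (Suc j)" by (rule approx_mono[OF assms])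
    then show "x \<in> Domain (approx e g (Suc j))" using n(1) by blast
  qed
qed

text \<open>The guess g n is good at stage n if it codes a long enough initial segment of q, longer
  than M plus room for the at most 6n values blocked by the current approximation, where
  beyond M the permutation q disagrees with e 0, ..., e (n-1).\<close>

definition predicts :: "(nat \<Rightarrow> nat \<Rightarrow> nat) \<Rightarrow> (nat \<Rightarrow> nat) \<Rightarrow> (nat \<Rightarrow> nat) \<Rightarrow> nat \<Rightarrow> bool" where
  "predicts e q g n \<longleftrightarrow>
     (\<exists>K M. list_decode (g n) = map q [0..<K] \<and> 7 * n + 8 + M \<le> K \<and>
            (\<forall>j<n. \<forall>x\<ge>M. q x \<noteq> e j x))"

text \<open>Counting: a finite partial injection R blocks at most 2 card R points x, namely those in
  its domain or with q x in its range, so an interval longer than that contains a free point.\<close>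

lemma free_point_in_interval:
  assumes R: "finite R" and q: "inj q" and long: "2 * card R < K - M"
  shows "\<exists>x\<in>{M..<K}. x \<notin> Domain R \<union> q -` Range R"
proof -
  have fR: "finite (Range R)" using R by (simp add: finite_Range)
  have "card (Domain R) \<le> card R"
    using card_image_le[OF R, of fst] by (simp add: fst_eq_Domain)
  moreover have "card (q -` Range R) \<le> card R"
  proof -
    have "card (q -` Range R) = card (q ` (q -` Range R))"
      by (rule card_image[symmetric], rule inj_on_subset[OF q], simp)
    also have "\<dots> \<le> card (Range R)" using fR by (intro card_mono) auto
    also have "\<dots> \<le> card R" using card_image_le[OF R, of snd] by (simp add: snd_eq_Range)
    finally show ?thesis .
  qed
  ultimately have blocked: "card (Domain R \<union> q -` Range R) \<le> 2 * card R"
    using card_Un_le[of "Domain R" "q -` Range R"] by linarith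
  show ?thesis
  proof (rule ccontr)
    assume "\<not> ?thesis"
    then have "{M..<K} \<subseteq> Domain R \<union> q -` Range R" by blast
    then have "card {M..<K} \<le> card (Domain R \<union> q -` Range R)"
      using R fR q by (intro card_mono) (auto simp: finite_Domain finite_vimageI)
    then show False using blocked long by simp
  qed
qed

lemma guess_hit:
  assumes inj: "\<forall>j. inj (e j)" "inj q" and pred: "predicts e q g n"
  shows "\<exists>x. x \<notin> Domain (approx e g n) \<and> (x, q x) \<in> approx e g (Suc n)"
proof -
  let ?R = "approx e g n" and ?L = "list_decode (g n)"
  obtain K M where L: "?L = map q [0..<K]" and K: "7 * n + 8 + M \<le> K"
    and M: "\<And>j x. j < n \<Longrightarrow> M \<le> x \<Longrightarrow> q x \<noteq> e j x"
    using pred unfolding predicts_def by blast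
  have R: "finite ?R" "card ?R \<le> 3 * n" using approx_props[OF inj(1)] by auto
  then have "2 * card ?R < K - M" using K by linarith
  from free_point_in_interval[OF R(1) inj(2) this]
  obtain x where x: "x \<in> {M..<K}" "x \<notin> Domain ?R \<union> q -` Range ?R" by blast
  have "avoids e n x (q x)" unfolding avoids_def using M x(1) by (metis atLeastLessThan_iff)
  then have "x \<in> guess_candidates e ?L n ?R"
    using L x unfolding guess_candidates_def by auto
  then have C: "guess_candidates e ?L n ?R \<noteq> {}" by blast
  let ?m = "Min (guess_candidates e ?L n ?R)"
  have "?m \<in> guess_candidates e ?L n ?R"
    using C by (intro Min_in) (auto simp: guess_candidates_def)
  then have "?m \<notin> Domain ?R" "?L ! ?m = q ?m" using L unfolding guess_candidates_def by auto
  moreover have "(?m, ?L ! ?m) \<in> guess_step e ?L n ?R" using C unfolding guess_step_def Let_def by simp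
  ultimately show ?thesis using stage_props(5)[OF R(1) _ inj(1), where g=g and n=n] approx_props[OF inj(1)]
    by auto
qed

lemma diag0_meets:
  assumes inj: "\<forall>j. inj (e j)" "inj q" and inf: "infinite {n. predicts e q g n}"
  shows "infinite {x. diag0 e g x = q x}"
proof -
  let ?N = "{n. predicts e q g n}"
  have "\<forall>n\<in>?N. \<exists>x. x \<notin> Domain (approx e g n) \<and> (x, q x) \<in> approx e g (Suc n)"
    using guess_hit[OF inj] by blast
  then obtain h where h: "\<And>n. n \<in> ?N \<Longrightarrow> h n \<notin> Domain (approx e g n) \<and> (h n, q (h n)) \<in> approx e g (Suc n)"
    by metis
  have separate: "h a \<noteq> h b" if "a \<in> ?N" "b \<in> ?N" "a < b" for a b
  proof -
    have "approx e g (Suc a) \<subseteq> approx e g b" using that(3) by (intro approx_mono[OF inj(1)]) simp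
    then show ?thesis using h[OF that(1)] h[OF that(2)] by (metis DomainI subsetD)
  qed
  have "inj_on h ?N"
    by (rule inj_onI, rule ccontr) (metis linorder_neq_iff separate)
  then have "infinite (h ` ?N)" using inf finite_imageD by blast
  moreover have "h ` ?N \<subseteq> {x. diag0 e g x = q x}"
  proof
    fix x assume "x \<in> h ` ?N"
    then obtain n where "n \<in> ?N" "x = h n" by blast
    then have "(x, q x) \<in> diag_graph e g" using h unfolding diag_graph_def by blast
    then show "x \<in> {x. diag0 e g x = q x}" using diag_graph_bij(2)[OF inj(1)] by simp
  qed
  ultimately show ?thesis using finite_subset by blast
qed

text \<open>To have a permutation for every input sequence, entries that are not permutations
  are replaced by the identity.\<close>

definition perm_or_id :: "(nat \<Rightarrow> nat \<Rightarrow> nat) \<Rightarrow> nat \<Rightarrow> nat \<Rightarrow> nat" where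
  "perm_or_id e j = (if bij (e j) then e j else id)"

definition diag :: "(nat \<Rightarrow> nat \<Rightarrow> nat) \<Rightarrow> (nat \<Rightarrow> nat) \<Rightarrow> nat \<Rightarrow> nat" where
  "diag e g = diag0 (perm_or_id e) g"

lemma perm_or_id_inj: "\<forall>j. inj (perm_or_id e j)"
  unfolding perm_or_id_def by (auto simp: bij_is_inj)

lemma diag_bij: "bij (diag e g)"
  unfolding diag_def using diag_graph_bij(1)[OF perm_or_id_inj] .

lemma diag_almost_disjoint:
  assumes "bij (e j)" shows "finite {x. diag e g x = e j x}"
  using diag0_almost_disjoint[OF perm_or_id_inj, of e g j] assms
  unfolding diag_def perm_or_id_def by simp

lemma diag_meets:
  assumes "\<forall>j. bij (e j)" "inj q" "infinite {n. predicts e q g n}"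
  shows "infinite {x. diag e g x = q x}"
proof -
  have "perm_or_id e = e" using assms(1) unfolding perm_or_id_def by auto
  then show ?thesis unfolding diag_def using diag0_meets[OF perm_or_id_inj[of e] assms(2)] assms(3) by simp
qed


section \<open>The well-order omega_1\<close>

lemma omega1_Card_order: "Card_order omega1"
  unfolding omega1_def by (rule cardSuc_Card_order[OF natLeq_Card_order])

lemma omega1_wo_rel: "wo_rel omega1"
  using omega1_Card_order card_order_on_well_order_on unfolding wo_rel_def by blast

lemma countable_iff_ordLeq_natLeq: "countable A \<longleftrightarrow> |A| \<le>o natLeq"
proof -
  have "countable A \<longleftrightarrow> |A| \<le>o |UNIV::nat set|"
    unfolding countable_def using card_of_ordLeq[of A "UNIV::nat set"] by auto
  then show ?thesis
    using card_of_nat ordIso_symmetric ordLeq_ordIso_trans by blast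
qed

lemma ordLess_cardSuc_natLeq_countable:
  assumes "|A| <o cardSuc natLeq" shows "countable A"
proof -
  have "\<not> natLeq <o |A|"
    using assms cardSuc_ordLess_ordLeq[OF natLeq_Card_order card_of_Card_order] not_ordLess_ordLeq
    by blast
  then have "|A| \<le>o natLeq"
    using not_ordLeq_iff_ordLess natLeq_Well_order card_of_Well_order by blast
  then show ?thesis using countable_iff_ordLeq_natLeq by blast
qed

lemma Omega1_card: "|Omega1| =o cardSuc natLeq"
  unfolding Omega1_def omega1_def by (rule card_of_Field_ordIso[OF cardSuc_Card_order[OF natLeq_Card_order]])

lemma countable_underS: "countable (underS omega1 \<delta>)"
proof (cases "\<delta> \<in> Omega1")
  case True
  then show ?thesis using card_of_underS[OF omega1_Card_order, of \<delta>]
    unfolding Omega1_def omega1_def by (simp add: ordLess_cardSuc_natLeq_countable)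
next
  case False
  then have "underS omega1 \<delta> = {}" unfolding Omega1_def underS_def by (auto intro: FieldI2)
  then show ?thesis by simp
qed

lemma olt_Field: "olt a b \<Longrightarrow> a \<in> Omega1 \<and> b \<in> Omega1"
  unfolding olt_def Omega1_def by (auto intro: FieldI1 FieldI2)

lemma olt_underS: "olt a b \<longleftrightarrow> a \<in> underS omega1 b"
  unfolding olt_def underS_def by auto

lemma olt_trans: assumes "olt a b" "olt b c" shows "olt a c"
proof -
  have ab: "(a, b) \<in> omega1" "a \<noteq> b" and bc: "(b, c) \<in> omega1" "b \<noteq> c"
    using assms unfolding olt_def by auto
  have "(a, c) \<in> omega1" using wo_rel.TRANS[OF omega1_wo_rel] ab(1) bc(1) by (rule transD)
  moreover have "a \<noteq> c"
    using antisymD[OF wo_rel.ANTISYM[OF omega1_wo_rel] ab(1)] ab(2) bc(1) by blast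
  ultimately show ?thesis unfolding olt_def by simp
qed

lemma olt_total: "a \<in> Omega1 \<Longrightarrow> b \<in> Omega1 \<Longrightarrow> a \<noteq> b \<Longrightarrow> olt a b \<or> olt b a"
  using wo_rel.TOTALS[OF omega1_wo_rel] unfolding olt_def Omega1_def by blast

lemma Omega1_uncountable: "\<not> countable Omega1"
proof
  assume "countable Omega1"
  then have "|Omega1| \<le>o natLeq" using countable_iff_ordLeq_natLeq by blast
  moreover have "natLeq <o |Omega1|"
    using cardSuc_greater[OF natLeq_Card_order] Omega1_card ordIso_symmetric ordLess_ordIso_trans
    by blast
  ultimately show False using not_ordLess_ordLeq by blast
qed

lemma countable_bounded:
  assumes "countable X" "X \<subseteq> Omega1" shows "\<exists>\<gamma>\<in>Omega1. \<forall>x\<in>X. olt x \<gamma>"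
proof -
  let ?Y = "\<Union>x\<in>X. insert x (underS omega1 x)"
  have "countable ?Y" using assms(1) countable_underS by blast
  then have "\<not> Omega1 \<subseteq> ?Y" using Omega1_uncountable countable_subset by blast
  then obtain \<gamma> where \<gamma>: "\<gamma> \<in> Omega1" "\<gamma> \<notin> ?Y" by blast
  have "olt x \<gamma>" if "x \<in> X" for x
  proof -
    have "x \<noteq> \<gamma>" "\<not> olt \<gamma> x" using \<gamma>(2) that olt_underS by auto
    then show ?thesis using olt_total \<gamma>(1) assms(2) that by blast
  qed
  then show ?thesis using \<gamma>(1) by blast
qed

lemma olt_minimal: assumes "y \<in> Y" shows "\<exists>m\<in>Y. \<forall>z\<in>Y. \<not> olt z m"
proof -
  have "wf (omega1 - Id)" by (rule wo_rel.WF[OF omega1_wo_rel])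
  then obtain m where "m \<in> Y" "\<forall>z. (z, m) \<in> omega1 - Id \<longrightarrow> z \<notin> Y"
    using assms wfE_min by metis
  then show ?thesis unfolding olt_def by auto
qed

text \<open>The lower bound a_p \<ge> aleph_1 (a theorem of ZFC): a countable almost disjoint family
  of permutations is never maximal, since the diagonal permutation of an enumeration of it
  is almost disjoint from all of its members.\<close>

lemma countable_not_mad:
  assumes "ad_perms A" "countable A"
  shows "\<exists>p. bij p \<and> p \<notin> A \<and> ad_perms (insert p A)"
proof -
  define e where "e = (\<lambda>j. if A = {} then id else from_nat_into A j)"
  define p where "p = diag e (\<lambda>_. 0)"
  have fin: "finite {x. p x = a x}" if a: "a \<in> A" for a
  proof -
    obtain j where "from_nat_into A j = a" using from_nat_into_surj[OF assms(2) a] by blast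
    then have "e j = a" using a by (auto simp: e_def)
    moreover have "bij (e j)" unfolding e_def using from_nat_into[of A j] assms(1)
      unfolding ad_perms_def by auto
    ultimately show ?thesis using diag_almost_disjoint[of e j] unfolding p_def by simp
  qed
  have fin': "finite {x. a x = p x}" if "a \<in> A" for a
    using fin[OF that] by (simp only: eq_commute)
  have bij_p: "bij p" unfolding p_def by (rule diag_bij)
  have "p \<notin> A"
  proof
    assume "p \<in> A"
    then show False using fin[of p] by simp
  qed
  moreover have "ad_perms (insert p A)"
    unfolding ad_perms_def
  proof (intro conjI ballI impI)
    fix r assume "r \<in> insert p A" then show "bij r" using bij_p assms(1) unfolding ad_perms_def by blast
  next
    fix r s assume "r \<in> insert p A" "s \<in> insert p A" "r \<noteq> s"
    then show "finite {n. r n = s n}" using assms(1) fin fin' unfolding ad_perms_def by blast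
  qed
  ultimately show ?thesis using bij_p by blast
qed

lemma mad_uncountable:
  assumes "mad_perms A" shows "cardSuc natLeq \<le>o |A|"
proof (rule ccontr)
  assume "\<not> cardSuc natLeq \<le>o |A|"
  then have "|A| <o cardSuc natLeq"
    using not_ordLeq_iff_ordLess card_of_Well_order cardSuc_Well_order[OF natLeq_Card_order]
    by blast
  then have "countable A" by (rule ordLess_cardSuc_natLeq_countable)
  then show False using countable_not_mad assms unfolding mad_perms_def by blast
qed


section \<open>The family defined by recursion along omega_1\<close>

definition enum_below :: "(nat set \<Rightarrow> nat \<Rightarrow> nat) \<Rightarrow> nat set \<Rightarrow> nat \<Rightarrow> nat \<Rightarrow> nat" where
  "enum_below p \<delta> j =
     (if underS omega1 \<delta> = {} then id else p (from_nat_into (underS omega1 \<delta>) j))"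

lemma enum_below_surj: assumes "olt \<alpha> \<delta>" shows "\<exists>j. enum_below p \<delta> j = p \<alpha>"
proof -
  have \<alpha>: "\<alpha> \<in> underS omega1 \<delta>" using assms olt_underS by blast
  then obtain j where "from_nat_into (underS omega1 \<delta>) j = \<alpha>"
    using from_nat_into_surj[OF countable_underS] by blast
  then show ?thesis using \<alpha> unfolding enum_below_def by auto
qed

definition fam :: "(nat set \<Rightarrow> nat \<Rightarrow> nat) \<Rightarrow> nat set \<Rightarrow> nat \<Rightarrow> nat" where
  "fam G = wo_rel.worec omega1 (\<lambda>p \<delta>. diag (enum_below p \<delta>) (G \<delta>))"

lemma fam_eq: "fam G \<delta> = diag (enum_below (fam G) \<delta>) (G \<delta>)"
proof -
  let ?H = "\<lambda>p \<delta>. diag (enum_below p \<delta>) (G \<delta>)"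
  have "wo_rel.adm_wo omega1 ?H"
    unfolding wo_rel.adm_wo_def[OF omega1_wo_rel]
  proof (intro allI impI)
    fix p p' :: "nat set \<Rightarrow> nat \<Rightarrow> nat" and \<delta>
    assume agree: "\<forall>\<alpha>\<in>underS omega1 \<delta>. p \<alpha> = p' \<alpha>"
    have "from_nat_into (underS omega1 \<delta>) j \<in> underS omega1 \<delta>" if "underS omega1 \<delta> \<noteq> {}" for j
      using from_nat_into[OF that] .
    then have "enum_below p \<delta> = enum_below p' \<delta>"
      using agree unfolding enum_below_def by (auto simp: fun_eq_iff)
    then show "?H p \<delta> = ?H p' \<delta>" by simp
  qed
  then have "fam G = ?H (fam G)" unfolding fam_def by (rule wo_rel.worec_fixpoint[OF omega1_wo_rel])
  then show ?thesis by (metis)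
qed

lemma fam_bij: "bij (fam G \<delta>)"
  using fam_eq diag_bij by metis

lemma fam_almost_disjoint: assumes "olt \<alpha> \<delta>" shows "finite {x. fam G \<delta> x = fam G \<alpha> x}"
proof -
  obtain j where "enum_below (fam G) \<delta> j = fam G \<alpha>" using enum_below_surj[OF assms] by blast
  moreover have "bij (enum_below (fam G) \<delta> j)" unfolding enum_below_def using fam_bij by auto
  ultimately show ?thesis using diag_almost_disjoint[of "enum_below (fam G) \<delta>" j "G \<delta>"]
    by (simp flip: fam_eq)
qed

lemma fam_distinct_almost_disjoint:
  assumes "\<alpha> \<in> Omega1" "\<delta> \<in> Omega1" "\<alpha> \<noteq> \<delta>"
  shows "finite {x. fam G \<alpha> x = fam G \<delta> x}"
  using olt_total[OF assms] fam_almost_disjoint[of \<alpha> \<delta> G] fam_almost_disjoint[of \<delta> \<alpha> G]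
  by (auto simp: eq_commute)

lemma fam_ad_perms: "ad_perms (fam G ` Omega1)"
  unfolding ad_perms_def using fam_bij fam_distinct_almost_disjoint by blast

text \<open>The members are pairwise distinct, so the family has size aleph_1.\<close>

lemma fam_card: "|fam G ` Omega1| =o cardSuc natLeq"
proof -
  have "inj_on (fam G) Omega1"
  proof (rule inj_onI, rule ccontr)
    fix a b assume "a \<in> Omega1" "b \<in> Omega1" "fam G a = fam G b" "a \<noteq> b"
    then show False using fam_distinct_almost_disjoint[of a b G] by simp
  qed
  then have "|Omega1| =o |fam G ` Omega1|" using card_of_ordIso inj_on_imp_bij_betw by blast
  then show ?thesis using Omega1_card ordIso_symmetric ordIso_transitive by blast
qed


section \<open>Coding a permutation and its thresholds into a branch\<close>

text \<open>Positions in omega_1 reserved for the coordinates (\<beta>, k); they exist since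
  omega_1 \<times> N has the same size as omega_1.\<close>

definition pair_pos :: "nat set \<times> nat \<Rightarrow> nat set" where
  "pair_pos = (SOME f. inj_on f (Omega1 \<times> (UNIV::nat set)) \<and> f ` (Omega1 \<times> UNIV) \<subseteq> Omega1)"

lemma pair_pos: "inj_on pair_pos (Omega1 \<times> (UNIV::nat set))" "pair_pos ` (Omega1 \<times> UNIV) \<subseteq> Omega1"
proof -
  have inf: "infinite Omega1" using Omega1_uncountable countable_finite by blast
  then have "|UNIV::nat set| \<le>o |Omega1|"
    using infinite_iff_natLeq_ordLeq card_of_nat ordIso_ordLeq_trans by blast
  then have "|Omega1 \<times> (UNIV::nat set)| \<le>o |Omega1|"
    using card_of_Times_infinite[OF inf] ordIso_iff_ordLeq by blast
  then have "\<exists>f. inj_on f (Omega1 \<times> (UNIV::nat set)) \<and> f ` (Omega1 \<times> UNIV) \<subseteq> Omega1"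
    using card_of_ordLeq by blast
  then show "inj_on pair_pos (Omega1 \<times> (UNIV::nat set))" "pair_pos ` (Omega1 \<times> UNIV) \<subseteq> Omega1"
    unfolding pair_pos_def by (metis (mono_tags, lifting) someI_ex)+
qed

text \<open>The branch code_branch V records the value V \<beta> i = v by a 1 at position
  (\<beta>, \<langle>i, v\<rangle>); decode_at reads it back as the least v marked by a 1.\<close>

definition code_branch :: "(nat set \<Rightarrow> nat \<Rightarrow> nat) \<Rightarrow> nat set \<Rightarrow> nat" where
  "code_branch V \<gamma> =
     (if \<exists>\<beta>\<in>Omega1. \<exists>i v. \<gamma> = pair_pos (\<beta>, prod_encode (i, v)) \<and> V \<beta> i = v then 1 else 0)"

definition decode_at :: "(nat set \<Rightarrow> nat) \<Rightarrow> nat set \<Rightarrow> nat \<Rightarrow> nat" where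
  "decode_at s \<beta> i = (LEAST v. s (pair_pos (\<beta>, prod_encode (i, v))) = 1)"

lemma code_branch_Pi: "code_branch V \<in> Omega1 \<rightarrow> {0::nat, 1}"
  unfolding code_branch_def by auto

lemma code_branch_at:
  assumes "\<beta> \<in> Omega1"
  shows "code_branch V (pair_pos (\<beta>, prod_encode (i, v))) = (if V \<beta> i = v then 1 else 0)"
proof -
  have "pair_pos (\<beta>, prod_encode (i, v)) = pair_pos (\<beta>', prod_encode (i', v')) \<longleftrightarrow> (\<beta>, i, v) = (\<beta>', i', v')"
    if "\<beta>' \<in> Omega1" for \<beta>' i' v'
    using inj_onD[OF pair_pos(1), of "(\<beta>, prod_encode (i, v))" "(\<beta>', prod_encode (i', v'))"] assms that
    by (auto simp: prod_encode_eq)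
  then show ?thesis unfolding code_branch_def using assms by auto
qed

lemma decode_code_branch:
  assumes "\<beta> \<in> Omega1" "\<And>k. pair_pos (\<beta>, k) \<in> U"
  shows "decode_at (restrict (code_branch V) U) \<beta> i = V \<beta> i"
  using assms code_branch_at unfolding decode_at_def by (simp add: Least_equality)

section \<open>The Borel function fed to the diamond principle\<close>

text \<open>From a sequence s of length \<delta>, guess_fun \<delta> s n is the code of the list of the first
  K values stored at below \<delta> 0, where K is 7n+8 plus the thresholds stored at the
  ordinals below \<delta> j, j < n; below \<delta> enumerates the ordinals less than \<delta>.\<close>

definition below :: "nat set \<Rightarrow> nat \<Rightarrow> nat set" where
  "below \<delta> = from_nat_into (underS omega1 \<delta>)"

definition guess_length :: "nat set \<Rightarrow> (nat set \<Rightarrow> nat) \<Rightarrow> nat \<Rightarrow> nat" where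
  "guess_length \<delta> s n = 7 * n + 8 + (\<Sum>j<n. decode_at s (below \<delta> j) 0)"

definition guess_list :: "nat set \<Rightarrow> (nat set \<Rightarrow> nat) \<Rightarrow> nat \<Rightarrow> nat" where
  "guess_list \<delta> s K = list_encode (map (\<lambda>x. decode_at s (below \<delta> 0) (Suc x)) [0..<K])"

definition guess_fun :: "nat set \<Rightarrow> (nat set \<Rightarrow> nat) \<Rightarrow> nat \<Rightarrow> nat" where
  "guess_fun \<delta> s n = guess_list \<delta> s (guess_length \<delta> s n)"

text \<open>Each coordinate guess_fun \<delta> s n depends on finitely many coordinates of s through
  countable-valued operations, hence is measurable.\<close>

lemma nat_borel_measurable_iff:
  "(f :: 'a \<Rightarrow> nat) \<in> borel_measurable M \<longleftrightarrow> f \<in> M \<rightarrow>\<^sub>M count_space UNIV"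
  using measurable_cong_sets[OF refl sets_borel_eq_count_space] by blast

lemma coordinate_measurable:
  "(\<lambda>s :: 'a \<Rightarrow> nat. s b) \<in> restrict_space borel X \<rightarrow>\<^sub>M count_space UNIV"
proof -
  have "(\<lambda>s :: 'a \<Rightarrow> nat. s b) \<in> borel_measurable (restrict_space borel X)"
    by (rule measurable_restrict_space1[OF measurable_product_coordinates])
  then show ?thesis unfolding nat_borel_measurable_iff .
qed

lemma measurable_combine_countable:
  fixes f :: "'m \<Rightarrow> 'a::countable" and g :: "'m \<Rightarrow> 'b::countable"
  assumes "f \<in> M \<rightarrow>\<^sub>M count_space UNIV" "g \<in> M \<rightarrow>\<^sub>M count_space UNIV"
  shows "(\<lambda>x. h (f x) (g x)) \<in> M \<rightarrow>\<^sub>M (count_space UNIV :: 'c measure)"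
proof (rule measurable_compose_countable'[where g=f and I=UNIV and f="\<lambda>i x. h i (g x)"])
  show "(\<lambda>x. h i (g x)) \<in> M \<rightarrow>\<^sub>M count_space UNIV" for i
    using measurable_compose[OF assms(2), of "h i" "count_space UNIV"] by simp
qed (use assms in auto)

lemma decode_at_measurable: "(\<lambda>s. decode_at s \<beta> i) \<in> restrict_space borel X \<rightarrow>\<^sub>M count_space UNIV"
  unfolding decode_at_def
  by (intro measurable_Least measurable_compose[OF coordinate_measurable, where g="\<lambda>x. x = 1"]) simp

lemma guess_length_measurable:
  "(\<lambda>s. guess_length \<delta> s n) \<in> restrict_space borel X \<rightarrow>\<^sub>M count_space UNIV"
proof -
  have "(\<lambda>s. \<Sum>j<m. decode_at s (below \<delta> j) 0) \<in> restrict_space borel X \<rightarrow>\<^sub>M count_space UNIV" for m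
  proof (induction m)
    case (Suc m)
    then show ?case using measurable_combine_countable[OF Suc decode_at_measurable, where h="(+)"] by simp
  qed simp
  from measurable_combine_countable[OF this measurable_const[of "7 * n + 8"], where h="\<lambda>a b. b + a"]
  show ?thesis unfolding guess_length_def by simp
qed

lemma guess_list_measurable:
  "(\<lambda>s. guess_list \<delta> s K) \<in> restrict_space borel X \<rightarrow>\<^sub>M count_space UNIV"
proof -
  have "(\<lambda>s. map (\<lambda>x. decode_at s (below \<delta> 0) (Suc x)) [0..<m]) \<in> restrict_space borel X \<rightarrow>\<^sub>M count_space UNIV" for m
  proof (induction m)
    case (Suc m)
    then show ?case using measurable_combine_countable[OF Suc decode_at_measurable, where h="\<lambda>l v. l @ [v]"] by simp
  qed simp
  from measurable_compose[OF this, of list_encode "count_space UNIV"]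
  show ?thesis unfolding guess_list_def by simp
qed

lemma guess_fun_Borel: "Borel_on_tree guess_fun"
  unfolding Borel_on_tree_def
proof
  fix \<delta> assume "\<delta> \<in> Omega1"
  show "guess_fun \<delta> \<in> borel_measurable (restrict_space borel (seqs2 \<delta>))"
  proof (rule measurable_coordinatewise_then_product)
    show "(\<lambda>s. guess_fun \<delta> s n) \<in> borel_measurable (restrict_space borel (seqs2 \<delta>))" for n
      unfolding guess_fun_def nat_borel_measurable_iff
      by (rule measurable_compose_countable'[where I=UNIV, OF guess_list_measurable guess_length_measurable]) simp
  qed
qed


section \<open>The club of closure points\<close>

lemma least_strict_bound:
  assumes "countable X" "X \<subseteq> Omega1"
  shows "\<exists>\<delta>\<in>Omega1. (\<forall>x\<in>X. olt x \<delta>) \<and> (\<forall>\<beta>. olt \<beta> \<delta> \<longrightarrow> (\<exists>x\<in>X. \<beta> = x \<or> olt \<beta> x))"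
proof -
  let ?B = "{\<eta> \<in> Omega1. \<forall>x\<in>X. olt x \<eta>}"
  obtain \<eta> where "\<eta> \<in> ?B" using countable_bounded[OF assms] by blast
  from olt_minimal[OF this]
  obtain \<delta> where \<delta>: "\<delta> \<in> ?B" "\<forall>z\<in>?B. \<not> olt z \<delta>" by blast
  have "\<exists>x\<in>X. \<beta> = x \<or> olt \<beta> x" if \<beta>: "olt \<beta> \<delta>" for \<beta>
  proof -
    have "\<beta> \<notin> ?B" using \<delta>(2) \<beta> by blast
    then obtain x where x: "x \<in> X" "\<not> olt x \<beta>" using olt_Field[OF \<beta>] by blast
    then have "\<beta> = x \<or> olt \<beta> x" using olt_total[of \<beta> x] olt_Field[OF \<beta>] assms(2) by blast
    then show ?thesis using x(1) by blast
  qed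
  then show ?thesis using \<delta>(1) by blast
qed

definition closure_points :: "nat set set" where
  "closure_points =
     {\<delta> \<in> Omega1. underS omega1 \<delta> \<noteq> {} \<and> (\<forall>\<beta> k. olt \<beta> \<delta> \<longrightarrow> olt (pair_pos (\<beta>, k)) \<delta>)}"

lemma closure_step:
  assumes "\<gamma> \<in> Omega1"
  shows "\<exists>\<eta>\<in>Omega1. olt \<gamma> \<eta> \<and> (\<forall>\<beta> k. (olt \<beta> \<gamma> \<or> \<beta> = \<gamma>) \<longrightarrow> olt (pair_pos (\<beta>, k)) \<eta>)"
proof -
  let ?X = "insert \<gamma> (pair_pos ` (insert \<gamma> (underS omega1 \<gamma>) \<times> UNIV))"
  have "countable ?X" using countable_underS by auto
  moreover have "?X \<subseteq> Omega1" using assms pair_pos(2) olt_Field olt_underS by blast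
  ultimately obtain \<eta> where "\<eta> \<in> Omega1" "\<forall>x\<in>?X. olt x \<eta>" using countable_bounded by blast
  then show ?thesis using olt_underS by auto
qed

text \<open>Iterating closure_step countably often and taking the supremum gives a closure point.\<close>

lemma closure_points_unbounded:
  assumes "\<alpha> \<in> Omega1" shows "\<exists>\<delta>\<in>closure_points. olt \<alpha> \<delta>"
proof -
  define nxt where "nxt \<gamma> = (SOME \<eta>. \<eta> \<in> Omega1 \<and> olt \<gamma> \<eta> \<and>
      (\<forall>\<beta> k. (olt \<beta> \<gamma> \<or> \<beta> = \<gamma>) \<longrightarrow> olt (pair_pos (\<beta>, k)) \<eta>))" for \<gamma>
  have nxt: "nxt \<gamma> \<in> Omega1" "olt \<gamma> (nxt \<gamma>)"
    "\<And>\<beta> k. olt \<beta> \<gamma> \<or> \<beta> = \<gamma> \<Longrightarrow> olt (pair_pos (\<beta>, k)) (nxt \<gamma>)"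
    if "\<gamma> \<in> Omega1" for \<gamma>
    using someI_ex[OF closure_step[OF that, unfolded Bex_def]] unfolding nxt_def by blast+
  define a where "a i = (nxt ^^ i) \<alpha>" for i
  have a_Suc: "a (Suc i) = nxt (a i)" for i by (simp add: a_def)
  have a_in: "a i \<in> Omega1" for i
  proof (induction i)
    case 0 then show ?case using assms by (simp add: a_def)
  next
    case (Suc i) then show ?case using nxt(1) a_Suc by simp
  qed
  have "countable (range a)" "range a \<subseteq> Omega1" using a_in by auto
  from least_strict_bound[OF this]
  obtain \<delta> where \<delta>: "\<delta> \<in> Omega1" "\<forall>x\<in>range a. olt x \<delta>"
    "\<forall>\<beta>. olt \<beta> \<delta> \<longrightarrow> (\<exists>x\<in>range a. \<beta> = x \<or> olt \<beta> x)"
    by blast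
  have "\<delta> \<in> closure_points"
    unfolding closure_points_def
  proof (intro CollectI conjI allI impI)
    show "underS omega1 \<delta> \<noteq> {}" using \<delta>(2) olt_underS by blast
    fix \<beta> k assume "olt \<beta> \<delta>"
    then obtain i where "\<beta> = a i \<or> olt \<beta> (a i)" using \<delta>(3) by auto
    then have "olt (pair_pos (\<beta>, k)) (a (Suc i))" using nxt(3)[OF a_in[of i]] unfolding a_Suc by blast
    then show "olt (pair_pos (\<beta>, k)) \<delta>" using \<delta>(2) olt_trans by blast
  qed (rule \<delta>(1))
  moreover have "olt \<alpha> \<delta>" using \<delta>(2) by (metis a_def funpow_0 rangeI)
  ultimately show ?thesis by blast
qed

lemma closure_points_closed:
  assumes "\<delta> \<in> Omega1" "\<exists>\<alpha>. olt \<alpha> \<delta>"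
    and limit: "\<forall>\<alpha>. olt \<alpha> \<delta> \<longrightarrow> (\<exists>\<beta>\<in>closure_points. olt \<alpha> \<beta> \<and> olt \<beta> \<delta>)"
  shows "\<delta> \<in> closure_points"
  unfolding closure_points_def
proof (intro CollectI conjI allI impI)
  show "underS omega1 \<delta> \<noteq> {}" using assms(2) olt_underS by blast
  fix \<beta> k assume "olt \<beta> \<delta>"
  then obtain \<eta> where "\<eta> \<in> closure_points" "olt \<beta> \<eta>" "olt \<eta> \<delta>" using limit by blast
  then show "olt (pair_pos (\<beta>, k)) \<delta>" unfolding closure_points_def using olt_trans by blast
qed (fact assms(1))

lemma club_closure_points: "club closure_points"
  unfolding club_def
proof (intro conjI ballI impI)
  show "closure_points \<subseteq> Omega1" unfolding closure_points_def by blast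
qed (simp_all add: closure_points_unbounded closure_points_closed)


section \<open>Diamond yields a maximal almost disjoint family\<close>

definition threshold_code :: "(nat set \<Rightarrow> nat) \<Rightarrow> (nat \<Rightarrow> nat) \<Rightarrow> nat set \<Rightarrow> nat \<Rightarrow> nat" where
  "threshold_code a q \<beta> i = (case i of 0 \<Rightarrow> a \<beta> | Suc x \<Rightarrow> q x)"

lemma below_closure_point:
  assumes "\<delta> \<in> closure_points"
  shows "olt (below \<delta> j) \<delta>" "below \<delta> j \<in> Omega1" "pair_pos (below \<delta> j, k) \<in> underS omega1 \<delta>"
proof -
  have "underS omega1 \<delta> \<noteq> {}" using assms unfolding closure_points_def by blast
  then have "below \<delta> j \<in> underS omega1 \<delta>" unfolding below_def by (rule from_nat_into)
  then show lt: "olt (below \<delta> j) \<delta>" by (simp add: olt_underS)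
  then show "below \<delta> j \<in> Omega1" using olt_Field by blast
  show "pair_pos (below \<delta> j, k) \<in> underS omega1 \<delta>"
    using assms lt unfolding closure_points_def olt_underS by blast
qed

text \<open>At a closure point the restricted branch contains the full code of a and q.\<close>

lemma guess_fun_reads_code:
  assumes "\<delta> \<in> closure_points"
  shows "guess_fun \<delta> (restrict (code_branch (threshold_code a q)) (underS omega1 \<delta>)) n =
           list_encode (map q [0..<7 * n + 8 + (\<Sum>j<n. a (below \<delta> j))])"
proof -
  have "decode_at (restrict (code_branch (threshold_code a q)) (underS omega1 \<delta>)) (below \<delta> j) i =
          threshold_code a q (below \<delta> j) i" for j i
    using below_closure_point[OF assms] by (intro decode_code_branch) auto
  then show ?thesis
    unfolding guess_fun_def guess_length_def guess_list_def by (simp add: threshold_code_def)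
qed

lemma predicts_at_closure_point:
  assumes "\<delta> \<in> closure_points" and a: "\<And>\<beta> x. \<beta> \<in> Omega1 \<Longrightarrow> a \<beta> \<le> x \<Longrightarrow> q x \<noteq> fam G \<beta> x"
    and guess: "G \<delta> n = guess_fun \<delta> (restrict (code_branch (threshold_code a q)) (underS omega1 \<delta>)) n"
  shows "predicts (enum_below (fam G) \<delta>) q (G \<delta>) n"
  unfolding predicts_def
proof (intro exI conjI allI impI)
  let ?M = "\<Sum>j<n. a (below \<delta> j)"
  show "list_decode (G \<delta> n) = map q [0..<7 * n + 8 + ?M]"
    using guess guess_fun_reads_code[OF assms(1)] by (simp add: list_encode_inverse)
  have ne: "underS omega1 \<delta> \<noteq> {}" using assms(1) unfolding closure_points_def by blast
  fix j x assume "j < n" "?M \<le> x"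
  moreover have "a (below \<delta> j) \<le> ?M" using \<open>j < n\<close> by (intro member_le_sum) auto
  ultimately have "a (below \<delta> j) \<le> x" by linarith
  moreover have "enum_below (fam G) \<delta> j = fam G (below \<delta> j)"
    using ne unfolding enum_below_def below_def by simp
  ultimately show "q x \<noteq> enum_below (fam G) \<delta> j x"
    using a below_closure_point(2)[OF assms(1)] by simp
qed simp

lemma disagreement_thresholds:
  fixes q :: "nat \<Rightarrow> nat" and p :: "'i \<Rightarrow> nat \<Rightarrow> nat"
  assumes "\<And>\<beta>. \<beta> \<in> S \<Longrightarrow> finite {x. q x = p \<beta> x}"
  obtains a where "\<And>\<beta> x. \<beta> \<in> S \<Longrightarrow> a \<beta> \<le> x \<Longrightarrow> q x \<noteq> p \<beta> x"
proof -
  have "\<exists>N. \<forall>x\<ge>N. q x \<noteq> p \<beta> x" if \<beta>: "\<beta> \<in> S" for \<beta>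
  proof -
    obtain N where "\<forall>x\<in>{x. q x = p \<beta> x}. x \<le> N"
      using assms[OF \<beta>] finite_nat_set_iff_bounded_le by blast
    then have "\<forall>x\<ge>Suc N. q x \<noteq> p \<beta> x" by fastforce
    then show ?thesis by blast
  qed
  then have "\<forall>\<beta>\<in>S. \<exists>N. \<forall>x\<ge>N. q x \<noteq> p \<beta> x" by blast
  from bchoice[OF this] obtain a where "\<forall>\<beta>\<in>S. \<forall>x\<ge>a \<beta>. q x \<noteq> p \<beta> x" by blast
  then show ?thesis using that by blast
qed

lemma fam_mad:
  assumes guessing: "\<forall>f \<in> Omega1 \<rightarrow> {0::nat, 1}.
    stationary {\<delta> \<in> Omega1. eq_inf (guess_fun \<delta> (restrict f (underS omega1 \<delta>))) (G \<delta>)}"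
  shows "mad_perms (fam G ` Omega1)"
  unfolding mad_perms_def
proof (intro conjI allI impI notI fam_ad_perms)
  fix q assume q: "bij q \<and> q \<notin> fam G ` Omega1" and ad: "ad_perms (insert q (fam G ` Omega1))"
  have fin: "finite {x. q x = fam G \<beta> x}" if "\<beta> \<in> Omega1" for \<beta>
  proof -
    have "q \<noteq> fam G \<beta>" "fam G \<beta> \<in> insert q (fam G ` Omega1)" using q that by auto
    then show ?thesis using ad unfolding ad_perms_def by blast
  qed
  obtain a where a: "\<And>\<beta> x. \<beta> \<in> Omega1 \<Longrightarrow> a \<beta> \<le> x \<Longrightarrow> q x \<noteq> fam G \<beta> x"
    using disagreement_thresholds[of Omega1 q "fam G", OF fin] by blast
  let ?s = "\<lambda>\<delta>. restrict (code_branch (threshold_code a q)) (underS omega1 \<delta>)"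
  have "stationary {\<delta> \<in> Omega1. eq_inf (guess_fun \<delta> (?s \<delta>)) (G \<delta>)}"
    using bspec[OF guessing code_branch_Pi] .
  then have "{\<delta> \<in> Omega1. eq_inf (guess_fun \<delta> (?s \<delta>)) (G \<delta>)} \<inter> closure_points \<noteq> {}"
    using club_closure_points unfolding stationary_def by blast
  then obtain \<delta> where \<delta>: "\<delta> \<in> closure_points" "eq_inf (guess_fun \<delta> (?s \<delta>)) (G \<delta>)"
    by blast
  have "{n. guess_fun \<delta> (?s \<delta>) n = G \<delta> n} \<subseteq> {n. predicts (enum_below (fam G) \<delta>) q (G \<delta>) n}"
  proof (intro subsetI CollectI)
    fix n assume "n \<in> {n. guess_fun \<delta> (?s \<delta>) n = G \<delta> n}"
    then show "predicts (enum_below (fam G) \<delta>) q (G \<delta>) n"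
      using predicts_at_closure_point[OF \<delta>(1) a, where n=n] by simp
  qed
  then have "infinite {n. predicts (enum_below (fam G) \<delta>) q (G \<delta>) n}"
    using \<delta>(2) finite_subset unfolding eq_inf_def by blast
  moreover have "\<forall>j. bij (enum_below (fam G) \<delta> j)" by (simp add: enum_below_def fam_bij)
  ultimately have "infinite {x. diag (enum_below (fam G) \<delta>) (G \<delta>) x = q x}"
    using q bij_is_inj diag_meets by blast
  then have "infinite {x. fam G \<delta> x = q x}" by (simp flip: fam_eq)
  then have "infinite {x. q x = fam G \<delta> x}" by (simp add: eq_commute)
  then show False using fin \<delta>(1) unfolding closure_points_def by blast
qed

theorem mainTheorem15:
  assumes "Diamond_Baire_eqinf"
  shows "ap_eq_aleph1"
proof -
  obtain G where "\<forall>f \<in> Omega1 \<rightarrow> {0::nat, 1}.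
      stationary {\<delta> \<in> Omega1. eq_inf (guess_fun \<delta> (restrict f (underS omega1 \<delta>))) (G \<delta>)}"
    using assms guess_fun_Borel unfolding Diamond_Baire_eqinf_def by blast
  then have "mad_perms (fam G ` Omega1)" by (rule fam_mad)
  then show ?thesis
    unfolding ap_eq_aleph1_def using fam_card mad_uncountable by blast
qed

end
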